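(* Fix any total budget $\mathrm{TB}\in\mathbb N_0$. For every integer $n\in\mathbb Z$, the integer game form $n$ satisfies $n=\{n-1\mid n+1\}$, where $n-1$ and $n+1$ denote the corresponding integer game forms.
   Context: Game forms are defined recursively: $G=\{G^{\mathcal L}\mid G^{\mathcal R}\}$ with finite sets of Left and Right options, and finite birthday. Integer game forms: $0=\{\varnothing\mid\varnothing\}$; for $n\in\mathbb N$, $n=\{n-1\mid\varnothing\}$ and $-n=\bar n=\{\varnothing\mid -(n-1)\}$, where the conjugate is $\bar G=\{\overline{G^{\mathcal R}}\mid\overline{G^{\mathcal L}}\}$. The budget set for total budget $\mathrm{TB}$ is $\mathcal B=\{0,\dots,\mathrm{TB},\hat 0,\dots,\widehat{\mathrm{TB}}\}$: state $p$ (resp. $\hat p$) means Left holds $p$ dollars and Right holds $\mathrm{TB}-p$, and Right (resp. Left) holds the tie-breaking marker. Play of $(G,\tilde p)$: at every position (terminal ones included) both players bid simultaneously, Left $\ell\in\{0,\dots,p\}$, Right $r\in\{0,\dots,\mathrm{TB}-p\}$. If Left holds the marker (state $\hat p$): if $\ell>r$ Left moves to $(G^L,\widehat{p-\ell})$, or, including the marker (allowed when $\ell\ge r$), to $(G^L,p-\ell)$; if $\ell=r$ Left wins, the marker passes to Right, play continues at $(G^L,p-\ell)$; if $\ell<r$ Right moves to $(G^R,\widehat{p+r})$. Symmetrically when Right holds the marker (state $p$): if $r>\ell$ Right moves to $(G^R,p+r)$ or, including the marker, to $(G^R,\widehat{p+r})$; if $r=\ell$ Right wins, the marker passes to Left,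 play continues at $(G^R,\widehat{p+r})$; if $r<\ell$ Left moves to $(G^L,p-\ell)$. A player who wins a bid but has no option loses. $o(G,\tilde p)\in\{\mathrm L,\mathrm R\}$ is the winner under optimal play; $\mathrm L>\mathrm R$. Disjunctive sum $G+H=\{G^{\mathcal L}+H,G+H^{\mathcal L}\mid G^{\mathcal R}+H,G+H^{\mathcal R}\}$. $G\ge H$ means $o(G+X,\tilde p)\ge o(H+X,\tilde p)$ for all game forms $X$ and all $\tilde p\in\mathcal B$; $G=H$ means $G\ge H$ and $H\ge G$. *)

theory Defs
  imports Main "HOL-Library.FSet"
begin

text \<open>Game forms: finite sets of Left and Right options; finite birthday is automatic
  from the inductive datatype.\<close>
datatype game = Game "game fset" "game fset"

primrec conj :: "game \<Rightarrow> game" where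
  "conj (Game GL GR) = Game (fimage conj GR) (fimage conj GL)"

primrec nat_game :: "nat \<Rightarrow> game" where
  "nat_game 0 = Game {||} {||}"
| "nat_game (Suc k) = Game {|nat_game k|} {||}"

definition int_game :: "int \<Rightarrow> game" where
  "int_game n = (if 0 \<le> n then nat_game (nat n) else conj (nat_game (nat (- n))))"

text \<open>Disjunctive sum. plus_aux FL FR H computes G + H where FL, FR are the functions
  (\<lambda>X. G' + X) for the Left resp. Right options G' of G.\<close>
primrec plus_aux :: "(game \<Rightarrow> game) fset \<Rightarrow> (game \<Rightarrow> game) fset \<Rightarrow> game \<Rightarrow> game" where
  "plus_aux FL FR (Game HL HR) =
     Game (fimage (\<lambda>f. f (Game HL HR)) FL |\<union>| fimage (plus_aux FL FR) HL)
          (fimage (\<lambda>f. f (Game HL HR)) FR |\<union>| fimage (plus_aux FL FR) HR)"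

primrec gplus :: "game \<Rightarrow> game \<Rightarrow> game" where
  "gplus (Game GL GR) = plus_aux (fimage gplus GL) (fimage gplus GR)"

text \<open>A state (p, h) with p \<le> TB: Left holds p dollars,
  Right holds TB - p; h = True means Left holds the tie-breaking marker (state \<hat>p),
  h = False means Right holds it (state p). lwins TB G s holds iff o(G,s) = L,
  i.e. Left has a bid such that for every Right bid Left wins under optimal continuation.\<close>
primrec lwins :: "nat \<Rightarrow> game \<Rightarrow> nat \<times> bool \<Rightarrow> bool" where
  "lwins TB (Game GL GR) = (\<lambda>(p, h).
     \<exists>l \<le> p. \<forall>r \<le> TB - p.
       (if h then
          (if r < l then (\<exists>f |\<in>| fimage (lwins TB) GL. f (p - l, True) \<or> f (p - l, False))
           else if l = r then (\<exists>f |\<in>| fimage (lwins TB) GL. f (p - l, False))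
           else (\<forall>f |\<in>| fimage (lwins TB) GR. f (p + r, True)))
        else
          (if l < r then (\<forall>f |\<in>| fimage (lwins TB) GR. f (p + r, False) \<and> f (p + r, True))
           else if l = r then (\<forall>f |\<in>| fimage (lwins TB) GR. f (p + r, True))
           else (\<exists>f |\<in>| fimage (lwins TB) GL. f (p - l, False)))))"

definition game_ge :: "nat \<Rightarrow> game \<Rightarrow> game \<Rightarrow> bool" where
  "game_ge TB G H = (\<forall>X p h. p \<le> TB \<longrightarrow> lwins TB (gplus H X) (p, h) \<longrightarrow> lwins TB (gplus G X) (p, h))"

definition game_eq :: "nat \<Rightarrow> game \<Rightarrow> game \<Rightarrow> bool" where
  "game_eq TB G H = (game_ge TB G H \<and> game_ge TB H G)"

end

theory Submission
  imports Defs
begin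

(* Order the states by Left's advantage, p < \<hat>p < p + 1.  The heart of the proof is that if Left
   wins n + X from some state, then she wins (n + 1) + X from every larger state.  This goes by
   induction on X and on |n|: at the larger state Left raises her bid by exactly her extra money
   (less the marker, if she has lost it), so that a won bid leaves her where she was before, and the
   options of the two sums are matched by induction.  Copying fails only for a zero bid without the
   marker, where a tie could now force Left to move; she then moves to n + X itself, or, if n < 0,
   (n + 1) + X is a Right option of n + X that Right could have reached at the larger state.
   With this, Left keeps her bids when passing between n + X and {n - 1 | n + 1} + X: the extra Right
   option (n + 1) + X of the latter loses for Right by monotonicity, and its extra Left option
   (n - 1) + X is of use only at states where n + X is already won. *)

primrec lefts :: "game \<Rightarrow> game fset" where
  "lefts (Game GL GR) = GL"

primrec rights :: "game \<Rightarrow> game fset" where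
  "rights (Game GL GR) = GR"

lemma int_game_0: "int_game 0 = Game {||} {||}"
  by (simp add: int_game_def)

lemma int_game_pos: "1 \<le> m \<Longrightarrow> int_game m = Game {|int_game (m - 1)|} {||}"
proof -
  assume "1 \<le> m"
  then have "nat m = Suc (nat (m - 1))" by simp
  with \<open>1 \<le> m\<close> show ?thesis by (simp add: int_game_def)
qed

lemma int_game_neg: "m \<le> -1 \<Longrightarrow> int_game m = Game {||} {|int_game (m + 1)|}"
proof -
  assume "m \<le> -1"
  then have "nat (- m) = Suc (nat (- (m + 1)))" by simp
  moreover have "conj (nat_game (nat (- (m + 1)))) = int_game (m + 1)"
    using \<open>m \<le> -1\<close> by (cases "m = -1") (simp_all add: int_game_def)
  ultimately show ?thesis using \<open>m \<le> -1\<close> by (simp add: int_game_def)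
qed

lemma lefts_int_game: "lefts (int_game m) = (if 1 \<le> m then {|int_game (m - 1)|} else {||})"
  by (cases m "0::int" rule: linorder_cases) (simp_all add: int_game_pos int_game_neg int_game_0)

lemma rights_int_game: "rights (int_game m) = (if m \<le> -1 then {|int_game (m + 1)|} else {||})"
  by (cases m "0::int" rule: linorder_cases) (simp_all add: int_game_pos int_game_neg int_game_0)

lemma gplus_Game:
  "gplus (Game GL GR) H =
     Game ((\<lambda>G'. gplus G' H) |`| GL |\<union>| gplus (Game GL GR) |`| lefts H)
          ((\<lambda>G'. gplus G' H) |`| GR |\<union>| gplus (Game GL GR) |`| rights H)"
  by (cases H) (simp add: fset.map_comp o_def)

lemma lefts_gplus: "lefts (gplus G H) = (\<lambda>G'. gplus G' H) |`| lefts G |\<union>| gplus G |`| lefts H"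
  by (cases G) (simp only: gplus_Game lefts.simps)

lemma rights_gplus: "rights (gplus G H) = (\<lambda>G'. gplus G' H) |`| rights G |\<union>| gplus G |`| rights H"
  by (cases G) (simp only: gplus_Game rights.simps)

declare gplus.simps [simp del]

definition left_move_wins :: "nat \<Rightarrow> game \<Rightarrow> nat \<times> bool \<Rightarrow> bool" where
  "left_move_wins TB G s \<longleftrightarrow> (\<exists>G' |\<in>| lefts G. lwins TB G' s)"

definition right_moves_win :: "nat \<Rightarrow> game \<Rightarrow> nat \<times> bool \<Rightarrow> bool" where
  "right_moves_win TB G s \<longleftrightarrow> (\<forall>G' |\<in>| rights G. lwins TB G' s)"

lemma left_move_wins_gplus:
  "left_move_wins TB (gplus G X) s \<longleftrightarrow>
     (\<exists>G' |\<in>| lefts G. lwins TB (gplus G' X) s) \<or> (\<exists>X' |\<in>| lefts X. lwins TB (gplus G X') s)"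
  by (auto simp: left_move_wins_def lefts_gplus)

lemma right_moves_win_gplus:
  "right_moves_win TB (gplus G X) s \<longleftrightarrow>
     (\<forall>G' |\<in>| rights G. lwins TB (gplus G' X) s) \<and> (\<forall>X' |\<in>| rights X. lwins TB (gplus G X') s)"
  by (auto simp: right_moves_win_def rights_gplus)

(* The body of lwins with the continuations abstracted: PL s (PR s) says that Left wins after
   her (Right's) move to state s. *)
definition round_win :: "(nat \<times> bool \<Rightarrow> bool) \<Rightarrow> (nat \<times> bool \<Rightarrow> bool) \<Rightarrow>
    nat \<Rightarrow> bool \<Rightarrow> nat \<Rightarrow> nat \<Rightarrow> bool" where
  "round_win PL PR p h l r =
     (if h then
        (if r < l then PL (p - l, True) \<or> PL (p - l, False)
         else if l = r then PL (p - l, False)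
         else PR (p + r, True))
      else
        (if l < r then PR (p + r, False) \<and> PR (p + r, True)
         else if l = r then PR (p + r, True)
         else PL (p - l, False)))"

lemma lwins_iff_round_win:
  "lwins TB G (p, h) \<longleftrightarrow>
     (\<exists>l \<le> p. \<forall>r \<le> TB - p. round_win (left_move_wins TB G) (right_moves_win TB G) p h l r)"
  by (cases G) (simp add: round_win_def left_move_wins_def right_moves_win_def
      fBall_conj_distrib fBex_disj_distrib)

fun state_le :: "nat \<times> bool \<Rightarrow> nat \<times> bool \<Rightarrow> bool" where
  "state_le (p, h) (q, h') \<longleftrightarrow> p \<le> q \<and> (p = q \<longrightarrow> h \<longrightarrow> h')"

lemma round_win_mono:
  assumes "round_win PL PR p h l r" and "p + r \<le> TB"
    and "\<And>a b. state_le (a, b) (p, h) \<Longrightarrow> PL (a, b) \<Longrightarrow> QL (a, b)"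
    and "\<And>a b. state_le (p, h) (a, b) \<Longrightarrow> a \<le> TB \<Longrightarrow> PR (a, b) \<Longrightarrow> QR (a, b)"
  shows "round_win QL QR p h l r"
  using assms by (auto simp: round_win_def split: if_splits)

lemma lwins_options_mono:
  assumes "lwins TB G (p, h)" and "p \<le> TB"
    and left: "\<And>a b. state_le (a, b) (p, h) \<Longrightarrow>
                 left_move_wins TB G (a, b) \<Longrightarrow> left_move_wins TB G' (a, b)"
    and right: "\<And>a b. state_le (p, h) (a, b) \<Longrightarrow> a \<le> TB \<Longrightarrow>
                  right_moves_win TB G (a, b) \<Longrightarrow> right_moves_win TB G' (a, b)"
  shows "lwins TB G' (p, h)"
proof -
  from \<open>lwins TB G (p, h)\<close> obtain l where "l \<le> p"
    and win: "\<And>r. r \<le> TB - p \<Longrightarrow> round_win (left_move_wins TB G) (right_moves_win TB G) p h l r"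
    unfolding lwins_iff_round_win by blast
  have "round_win (left_move_wins TB G') (right_moves_win TB G') p h l r" if "r \<le> TB - p" for r
    by (rule round_win_mono[where TB = TB, OF win[OF that]])
      (use that \<open>p \<le> TB\<close> in simp, (blast intro: left right)+)
  with \<open>l \<le> p\<close> show ?thesis unfolding lwins_iff_round_win by blast
qed

context
  fixes TB :: nat and PL PR QL QR :: "nat \<times> bool \<Rightarrow> bool"
  assumes transfer_L: "\<And>a b c d. state_le (a, b) (c, d) \<Longrightarrow> c \<le> TB \<Longrightarrow>
                         PL (a, b) \<Longrightarrow> QL (c, d)"
    and transfer_R: "\<And>a b c d. state_le (a, b) (c, d) \<Longrightarrow> c \<le> TB \<Longrightarrow>
                       PR (a, b) \<Longrightarrow> QR (c, d)"
begin

lemma round_win_larger_state_keep_marker: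
  assumes win: "\<And>r. r \<le> TB - p \<Longrightarrow> round_win PL PR p h l r" and "l \<le> p"
    and "p \<le> q" and "q \<le> TB" and "h \<longrightarrow> h'"
    and not_zero_bid: "\<not> (\<not> h \<and> l = 0 \<and> (h' \<or> p < q))"
    and "r' \<le> TB - q"
  shows "round_win QL QR q h' (l + (q - p)) r'"
proof -
  have same_money: "q - (l + (q - p)) = p - l" using \<open>l \<le> p\<close> \<open>p \<le> q\<close> by simp
  have QL: "QL (p - l, b)" if "PL (p - l, b)" for b
    using transfer_L[of "p - l" b "p - l" b] that \<open>p \<le> q\<close> \<open>q \<le> TB\<close> by simp
  have QR: "QR (q + r', b')" if "PR (p + r, b)" "state_le (p + r, b) (q + r', b')" for r b b'
    using transfer_R that \<open>r' \<le> TB - q\<close> \<open>q \<le> TB\<close> by simp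
  have win0: "round_win PL PR p h l 0" using win by simp
  consider (left) "r' < l + (q - p)" | (tie) "r' = l + (q - p)" | (right) "l + (q - p) < r'"
    by linarith
  then show ?thesis
  proof cases
    case left
    then show ?thesis using win0 same_money not_zero_bid \<open>h \<longrightarrow> h'\<close> QL[of False]
      by (auto simp: round_win_def split: if_splits intro: QL)
  next
    case tie
    have "round_win PL PR p h l l" using win tie \<open>r' \<le> TB - q\<close> \<open>p \<le> q\<close> by simp
    then show ?thesis
      using win0 tie same_money not_zero_bid QL[of False] QR[of l True True] \<open>h \<longrightarrow> h'\<close> \<open>p \<le> q\<close>
      by (auto simp: round_win_def split: if_splits intro: QL)
  next
    case right
    have "round_win PL PR p h l r'" using win \<open>r' \<le> TB - q\<close> \<open>p \<le> q\<close> by simp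
    then show ?thesis using right \<open>h \<longrightarrow> h'\<close> \<open>p \<le> q\<close> QR[of r']
      by (auto simp: round_win_def split: if_splits)
  qed
qed

lemma round_win_larger_state_lose_marker:
  assumes win: "\<And>r. r \<le> TB - p \<Longrightarrow> round_win PL PR p True l r" and "l \<le> p"
    and "p < q" and "q \<le> TB" and "r' \<le> TB - q"
  shows "round_win QL QR q False (l + (q - p) - 1) r'"
proof -
  have QL: "QL (Suc (p - l), False)" if "PL (p - l, b)" for b
    using transfer_L[of "p - l" b "p - l + 1" False] that \<open>l \<le> p\<close> \<open>p < q\<close> \<open>q \<le> TB\<close> by simp
  have QR: "QR (q + r', b')" if "PR (p + r, b)" "state_le (p + r, b) (q + r', b')" for r b b'
    using transfer_R that \<open>r' \<le> TB - q\<close> \<open>q \<le> TB\<close> by simp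
  consider (left) "r' < l + (q - p) - 1" | (tie) "r' = l + (q - p) - 1"
    | (right) "l + (q - p) - 1 < r'"
    by linarith
  then show ?thesis
  proof cases
    case left
    have "round_win PL PR p True l 0" using win by simp
    then have "QL (Suc (p - l), False)" using QL[of True] QL[of False]
      by (auto simp: round_win_def split: if_splits)
    moreover have "q - (l + (q - p) - 1) = Suc (p - l)" using \<open>l \<le> p\<close> \<open>p < q\<close> by simp
    ultimately show ?thesis using left by (simp only: round_win_def) simp
  next
    case tie
    have "QR (q + r', True)"
    proof (cases "l < r'")
      case True
      have "round_win PL PR p True l r'" using win \<open>r' \<le> TB - q\<close> \<open>p < q\<close> by simp
      then show ?thesis using True QR[of r' True True] \<open>p < q\<close> by (simp add: round_win_def)
    next
      case False
      then have "r' = l" "q = p + 1" using tie \<open>p < q\<close> by auto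
      moreover have "round_win PL PR p True l (l + 1)"
        using win[of "l + 1"] \<open>r' \<le> TB - q\<close> \<open>r' = l\<close> \<open>q = p + 1\<close> \<open>q \<le> TB\<close> by simp
      ultimately show ?thesis using QR[of "l + 1" True True] by (simp add: round_win_def)
    qed
    then show ?thesis using tie by (simp add: round_win_def)
  next
    case right
    have "round_win PL PR p True l r'" using win \<open>r' \<le> TB - q\<close> \<open>p < q\<close> by simp
    then show ?thesis using right \<open>p < q\<close> QR[of r' True]
      by (auto simp: round_win_def split: if_splits)
  qed
qed

lemma round_win_larger_state_zero_bid:
  assumes win: "\<And>r. r \<le> TB - p \<Longrightarrow> round_win PL PR p False 0 r"
    and "p \<le> q" and "q \<le> TB" and "h' \<or> p < q" and "QL (p, False)"
    and "r' \<le> TB - q"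
  shows "round_win QL QR q h' (q - p) r'"
proof -
  have "round_win PL PR p False 0 r'" using win \<open>r' \<le> TB - q\<close> \<open>p \<le> q\<close> by simp
  then have "PR (p + r', True)" by (auto simp: round_win_def split: if_splits)
  then have "QR (q + r', True)" and "\<not> h' \<Longrightarrow> QR (q + r', False)"
    using transfer_R[of "p + r'" True "q + r'"] \<open>p \<le> q\<close> \<open>h' \<or> p < q\<close> \<open>r' \<le> TB - q\<close> \<open>q \<le> TB\<close>
    by auto
  then show ?thesis using \<open>QL (p, False)\<close> \<open>p \<le> q\<close> by (auto simp: round_win_def)
qed

(* Left raises her bid by her extra money q - p, less one if she has lost the marker.  A zero bid
   without the marker cannot be raised that way when Left has gained the marker or money: a tie
   would then make her move, whence the hypothesis zero_bid. *)
lemma round_win_larger_state: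
  assumes win: "\<And>r. r \<le> TB - p \<Longrightarrow> round_win PL PR p h l r" and "l \<le> p"
    and le: "state_le (p, h) (q, h')" and "q \<le> TB"
    and zero_bid: "\<not> h \<Longrightarrow> l = 0 \<Longrightarrow> h' \<or> p < q \<Longrightarrow> QL (p, False)"
  shows "\<exists>l' \<le> q. \<forall>r' \<le> TB - q. round_win QL QR q h' l' r'"
proof -
  have "p \<le> q" using le by simp
  consider (zero) "\<not> h" "l = 0" "h' \<or> p < q"
    | (keep) "\<not> (\<not> h \<and> l = 0 \<and> (h' \<or> p < q))" "h \<longrightarrow> h'"
    | (lose) "h" "\<not> h'"
    by blast
  then show ?thesis
  proof cases
    case zero
    then have "\<forall>r' \<le> TB - q. round_win QL QR q h' (q - p) r'"
      using round_win_larger_state_zero_bid[of p q h'] win zero_bid \<open>p \<le> q\<close> \<open>q \<le> TB\<close> by simp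
    then show ?thesis by (meson diff_le_self)
  next
    case keep
    have "\<forall>r' \<le> TB - q. round_win QL QR q h' (l + (q - p)) r'"
      using round_win_larger_state_keep_marker[OF win \<open>l \<le> p\<close> \<open>p \<le> q\<close> \<open>q \<le> TB\<close> keep(2,1)]
      by simp
    moreover have "l + (q - p) \<le> q" using \<open>l \<le> p\<close> \<open>p \<le> q\<close> by simp
    ultimately show ?thesis by blast
  next
    case lose
    then have "p < q" using le by auto
    have "\<forall>r' \<le> TB - q. round_win QL QR q h' (l + (q - p) - 1) r'"
      using round_win_larger_state_lose_marker[of p l q] win lose \<open>l \<le> p\<close> \<open>p < q\<close> \<open>q \<le> TB\<close>
      by simp
    moreover have "l + (q - p) - 1 \<le> q" using \<open>l \<le> p\<close> \<open>p \<le> q\<close> by simp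
    ultimately show ?thesis by blast
  qed
qed

end

lemma lwins_larger_state:
  assumes "lwins TB G (p, h)" and le: "state_le (p, h) (q, h')" and "q \<le> TB"
    and left: "\<And>a b c d. state_le (a, b) (c, d) \<Longrightarrow> c \<le> TB \<Longrightarrow>
                 left_move_wins TB G (a, b) \<Longrightarrow> left_move_wins TB G' (c, d)"
    and right: "\<And>a b c d. state_le (a, b) (c, d) \<Longrightarrow> c \<le> TB \<Longrightarrow>
                  right_moves_win TB G (a, b) \<Longrightarrow> right_moves_win TB G' (c, d)"
    and zero_bid: "\<not> h \<Longrightarrow> h' \<or> p < q \<Longrightarrow> G' |\<in>| rights G \<or> left_move_wins TB G' (p, False)"
  shows "lwins TB G' (q, h')"
proof -
  have "p \<le> q" using le by simp
  from \<open>lwins TB G (p, h)\<close> obtain l where "l \<le> p"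
    and win: "\<And>r. r \<le> TB - p \<Longrightarrow> round_win (left_move_wins TB G) (right_moves_win TB G) p h l r"
    unfolding lwins_iff_round_win by blast
  show ?thesis
  proof (cases "\<not> h \<and> l = 0 \<and> (h' \<or> p < q) \<and> G' |\<in>| rights G")
    case True
    \<comment> \<open>Right answers the zero bid with q - p and moves to G' at state (q, h').\<close>
    have "round_win (left_move_wins TB G) (right_moves_win TB G) p h l (q - p)"
      using win \<open>q \<le> TB\<close> by simp
    then have "right_moves_win TB G (q, h')"
      using True \<open>p \<le> q\<close> by (cases "p < q"; cases h') (auto simp: round_win_def)
    then show ?thesis using True by (simp add: right_moves_win_def)
  next
    case False
    then have left_move: "left_move_wins TB G' (p, False)" if "\<not> h" "l = 0" "h' \<or> p < q"
      using zero_bid that by blast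
    have "\<exists>l' \<le> q. \<forall>r' \<le> TB - q.
        round_win (left_move_wins TB G') (right_moves_win TB G') q h' l' r'"
      by (rule round_win_larger_state
          [where PL = "left_move_wins TB G" and PR = "right_moves_win TB G"])
        (fact left right win \<open>l \<le> p\<close> le \<open>q \<le> TB\<close> left_move)+
    then show ?thesis unfolding lwins_iff_round_win .
  qed
qed

definition succ_mono :: "nat \<Rightarrow> int \<Rightarrow> game \<Rightarrow> bool" where
  "succ_mono TB m X \<longleftrightarrow>
     (\<forall>s t. state_le s t \<longrightarrow> fst t \<le> TB \<longrightarrow>
        lwins TB (gplus (int_game m) X) s \<longrightarrow> lwins TB (gplus (int_game (m + 1)) X) t)"

lemma left_move_wins_gplus_int_game_succ:
  assumes "1 \<le> m \<Longrightarrow> succ_mono TB (m - 1) X" and "\<forall>X' |\<in>| lefts X. succ_mono TB m X'"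
    and le: "state_le (a, b) (c, d)" "c \<le> TB"
    and G: "left_move_wins TB (gplus (int_game m) X) (a, b)"
  shows "left_move_wins TB (gplus (int_game (m + 1)) X) (c, d)"
proof -
  from G consider "1 \<le> m" "lwins TB (gplus (int_game (m - 1)) X) (a, b)"
    | X' where "X' |\<in>| lefts X" "lwins TB (gplus (int_game m) X') (a, b)"
    by (auto simp: left_move_wins_gplus lefts_int_game split: if_splits)
  then show ?thesis
  proof cases
    case 1
    with assms(1) le have "lwins TB (gplus (int_game m) X) (c, d)"
      unfolding succ_mono_def by fastforce
    with \<open>1 \<le> m\<close> show ?thesis by (auto simp: left_move_wins_gplus lefts_int_game)
  next
    case 2
    with assms(2) le have "lwins TB (gplus (int_game (m + 1)) X') (c, d)"
      unfolding succ_mono_def by fastforce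
    with \<open>X' |\<in>| lefts X\<close> show ?thesis by (auto simp: left_move_wins_gplus)
  qed
qed

lemma right_moves_win_gplus_int_game_succ:
  assumes "m + 1 \<le> -1 \<Longrightarrow> succ_mono TB (m + 1) X" and "\<forall>X' |\<in>| rights X. succ_mono TB m X'"
    and le: "state_le (a, b) (c, d)" "c \<le> TB"
    and G: "right_moves_win TB (gplus (int_game m) X) (a, b)"
  shows "right_moves_win TB (gplus (int_game (m + 1)) X) (c, d)"
  unfolding right_moves_win_gplus
proof (intro conjI ballI)
  fix G' assume "G' |\<in>| rights (int_game (m + 1))"
  then have "m + 1 \<le> -1" "G' = int_game (m + 1 + 1)"
    by (simp_all add: rights_int_game split: if_splits)
  moreover have "lwins TB (gplus (int_game (m + 1)) X) (a, b)"
    using G \<open>m + 1 \<le> -1\<close> by (simp add: right_moves_win_gplus rights_int_game)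
  ultimately show "lwins TB (gplus G' X) (c, d)"
    using assms(1) le unfolding succ_mono_def by fastforce
next
  fix X' assume "X' |\<in>| rights X"
  with G have "lwins TB (gplus (int_game m) X') (a, b)" by (simp add: right_moves_win_gplus)
  with \<open>X' |\<in>| rights X\<close> assms(2) le show "lwins TB (gplus (int_game (m + 1)) X') (c, d)"
    unfolding succ_mono_def by fastforce
qed

lemma succ_mono_int_game: "succ_mono TB m X"
proof (induction X arbitrary: m)
  case (Game XL XR)
  let ?X = "Game XL XR"
  show ?case
  proof (induction "nat \<bar>m\<bar>" arbitrary: m rule: less_induct)
    case less
    let ?G = "gplus (int_game m) ?X" and ?G' = "gplus (int_game (m + 1)) ?X"
    have IH: "1 \<le> m \<Longrightarrow> succ_mono TB (m - 1) ?X" "m + 1 \<le> -1 \<Longrightarrow> succ_mono TB (m + 1) ?X"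
      "\<forall>X' |\<in>| lefts ?X. succ_mono TB m X'" "\<forall>X' |\<in>| rights ?X. succ_mono TB m X'"
      using less.hyps Game.IH by auto
    have "lwins TB ?G' (q, h')"
      if "state_le (p, h) (q, h')" "q \<le> TB" and G: "lwins TB ?G (p, h)" for p h q h'
    proof (rule lwins_larger_state[OF G that(1,2)])
      show "?G' |\<in>| rights ?G \<or> left_move_wins TB ?G' (p, False)" if "\<not> h"
        using G \<open>\<not> h\<close> by (cases "m \<le> -1")
          (simp_all add: rights_gplus rights_int_game left_move_wins_gplus lefts_int_game)
    qed (use left_move_wins_gplus_int_game_succ[OF IH(1,3)]
          right_moves_win_gplus_int_game_succ[OF IH(2,4)] in blast)+
    then show ?case unfolding succ_mono_def by auto
  qed
qed

lemma lwins_gplus_int_game_succ_mono: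
  assumes "state_le s t" and "fst t \<le> TB" and "lwins TB (gplus (int_game m) X) s"
  shows "lwins TB (gplus (int_game (m + 1)) X) t"
  using succ_mono_int_game assms unfolding succ_mono_def by blast

lemma lwins_gplus_int_game_imp_neighbours:
  assumes "p \<le> TB" and "lwins TB (gplus (int_game n) X) (p, h)"
  shows "lwins TB (gplus (Game {|int_game (n - 1)|} {|int_game (n + 1)|}) X) (p, h)"
  using assms
proof (induction X arbitrary: p h)
  case (Game XL XR)
  let ?X = "Game XL XR" and ?K = "Game {|int_game (n - 1)|} {|int_game (n + 1)|}"
  show ?case
  proof (rule lwins_options_mono[OF Game.prems(2) \<open>p \<le> TB\<close>])
    fix a b assume "state_le (a, b) (p, h)" and G: "left_move_wins TB (gplus (int_game n) ?X) (a, b)"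
    then have "a \<le> TB" using \<open>p \<le> TB\<close> by simp
    from G consider "1 \<le> n" "lwins TB (gplus (int_game (n - 1)) ?X) (a, b)"
      | X' where "X' |\<in>| XL" "lwins TB (gplus (int_game n) X') (a, b)"
      by (auto simp: left_move_wins_gplus lefts_int_game split: if_splits)
    then show "left_move_wins TB (gplus ?K ?X) (a, b)"
    proof cases
      case 1
      then show ?thesis by (auto simp: left_move_wins_gplus)
    next
      case 2
      then have "lwins TB (gplus ?K X') (a, b)" using Game.IH(1) \<open>a \<le> TB\<close> by simp
      then show ?thesis using \<open>X' |\<in>| XL\<close> by (auto simp: left_move_wins_gplus)
    qed
  next
    fix a b assume le: "state_le (p, h) (a, b)" "a \<le> TB"
      and G: "right_moves_win TB (gplus (int_game n) ?X) (a, b)"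
    have "lwins TB (gplus (int_game (n + 1)) ?X) (a, b)"
    proof (cases "n \<le> -1")
      case True
      then show ?thesis using G by (simp add: right_moves_win_gplus rights_int_game)
    next
      case False
      show ?thesis
        using lwins_gplus_int_game_succ_mono[of "(p, h)" "(a, b)" TB n] le Game.prems(2) by simp
    qed
    moreover have "lwins TB (gplus ?K X') (a, b)" if "X' |\<in>| XR" for X'
      using that G Game.IH(2) \<open>a \<le> TB\<close> by (simp add: right_moves_win_gplus)
    ultimately show "right_moves_win TB (gplus ?K ?X) (a, b)" by (simp add: right_moves_win_gplus)
  qed
qed

lemma lwins_gplus_neighbours_imp_int_game:
  assumes "p \<le> TB" and "lwins TB (gplus (Game {|int_game (n - 1)|} {|int_game (n + 1)|}) X) (p, h)"
  shows "lwins TB (gplus (int_game n) X) (p, h)"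
  using assms
proof (induction X arbitrary: p h)
  case (Game XL XR)
  let ?X = "Game XL XR" and ?K = "Game {|int_game (n - 1)|} {|int_game (n + 1)|}"
  show ?case
  proof (cases "\<exists>s. state_le s (p, h) \<and> lwins TB (gplus (int_game (n - 1)) ?X) s")
    case True
    then obtain s where "state_le s (p, h)" "lwins TB (gplus (int_game (n - 1)) ?X) s" by blast
    then show ?thesis using lwins_gplus_int_game_succ_mono[of s "(p, h)" TB "n - 1"] \<open>p \<le> TB\<close> by simp
  next
    case False
    show ?thesis
    proof (rule lwins_options_mono[OF Game.prems(2) \<open>p \<le> TB\<close>])
      fix a b assume "state_le (a, b) (p, h)" and G: "left_move_wins TB (gplus ?K ?X) (a, b)"
      with False obtain X' where "X' |\<in>| XL" "lwins TB (gplus ?K X') (a, b)"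
        by (auto simp: left_move_wins_gplus)
      moreover have "a \<le> TB" using \<open>state_le (a, b) (p, h)\<close> \<open>p \<le> TB\<close> by simp
      ultimately have "lwins TB (gplus (int_game n) X') (a, b)" using Game.IH(1) by simp
      then show "left_move_wins TB (gplus (int_game n) ?X) (a, b)"
        using \<open>X' |\<in>| XL\<close> by (auto simp: left_move_wins_gplus)
    next
      fix a b assume "a \<le> TB" and G: "right_moves_win TB (gplus ?K ?X) (a, b)"
      then have "lwins TB (gplus (int_game n) X') (a, b)" if "X' |\<in>| XR" for X'
        using that Game.IH(2) by (simp add: right_moves_win_gplus)
      with G show "right_moves_win TB (gplus (int_game n) ?X) (a, b)"
        by (simp add: right_moves_win_gplus rights_int_game)
    qed
  qed
qed

theorem mainTheorem16:
  fixes TB :: nat and n :: int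
  shows "game_eq TB (int_game n) (Game {|int_game (n - 1)|} {|int_game (n + 1)|})"
  unfolding game_eq_def game_ge_def
  using lwins_gplus_int_game_imp_neighbours lwins_gplus_neighbours_imp_int_game by blast

end
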